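(* For every $\varepsilon\in(0,1]$ there exists $b_0$ such that for every $b\geq b_0$ there exists $\gamma_0>0$ such that for every $\gamma\in(0,\gamma_0]$ there exists $n_0$ such that for every $n\geq n_0$ the following holds. Let $G$ be an $(n,\varepsilon)$-digraph that is an induced subdigraph of some digraph $F$. Let $u\in V(F)\setminus V(G)$ and let $\mathbf{x}$ be a $b$-normal perfect fractional matching of $G$. Let $\Delta:=e^{\gamma\sqrt{\ln n}}$, let $n^{1/4}\leq m\leq3\Delta n^{1/4}$, and let $M\subseteq V(G)$ with $|M|=m+1$. Suppose that for all $v\in V(G)$ and $*\in\{+,-\}$: (i) $\sum_{w\in M\cap N_G^+(v)}\mathbf{x}_{vw}=\frac{m+1}n\pm n^{-\frac34-\frac1{18\sqrt{\ln n}}}$ and $\sum_{w\in M\cap N_G^-(v)}\mathbf{x}_{wv}=\frac{m+1}n\pm n^{-\frac34-\frac1{18\sqrt{\ln n}}}$; (ii) $\sum_{w\in M\cap N_G^+(v)}\mathbf{x}_{vw}\log\frac1{\mathbf{x}_{vw}}=\frac{m+1}nh^+_{\mathbf{x}}(v)\pm n^{-\frac34-\frac1{18\sqrt{\ln n}}}$ and $\sum_{w\in M\cap N_G^-(v)}\mathbf{x}_{wv}\log\frac1{\mathbf{x}_{wv}}=\frac{m+1}nh^-_{\mathbf{x}}(v)\pm n^{-\frac34-\frac1{18\sqrt{\ln n}}}$; (iii) $|N^*_{F,G}(u)|\geq(\frac12+\varepsilon)n$; (iv) $|N^*_{F,G}(u)\cap M|=\frac{m+1}n|N^*_{F,G}(u)|\pm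 n^{\frac14-\frac1{17\sqrt{\ln n}}}$. Then there is a $(1+n^{-\frac34-\frac1{22\sqrt{\ln n}}})b$-normal perfect fractional matching $\mathbf{z}$ of $F[(V(G)\setminus M)\cup\{u\}]$ with $h(\mathbf{z})\geq\frac{n-m}nh(\mathbf{x})-(n-m)\log\frac n{n-m}-n^{\frac14-\frac1{24\sqrt{\ln n}}}$.
   Context: $\log=\log_2$, $\ln$ is the natural logarithm. $a=\beta\pm c$ means $\beta-c\leq a\leq\beta+c$. Digraphs have no loops and at most one edge from $v$ to $w$ per ordered pair; $N^+_G(v),N^-_G(v)$ are out-/in-neighbourhoods, and $N^*_{F,G}(u)=N^*_F(u)\cap V(G)$. An $(n,\varepsilon)$-digraph is a digraph on $n$ vertices with every in- and out-degree at least $(\frac12+\varepsilon)n$. A perfect fractional matching of a digraph $H$ is $\mathbf{x}\colon E(H)\to\mathbb{R}_{\geq0}$ with $\sum_{w\in N^+(v)}\mathbf{x}_{vw}=1=\sum_{w\in N^-(v)}\mathbf{x}_{wv}$ for all $v$; it is $b$-normal if $\frac1{b|V(H)|}\leq\mathbf{x}_e\leq\frac b{|V(H)|}$ for all edges $e$. $h(\mathbf{x})=\sum_e\mathbf{x}_e\log\frac1{\mathbf{x}_e}$, $h^+_{\mathbf{x}}(v)=\sum_{w\in N^+(v)}\mathbf{x}_{vw}\log\frac1{\mathbf{x}_{vw}}$, $h^-_{\mathbf{x}}(v)=\sum_{w\in N^-(v)}\mathbf{x}_{wv}\log\frac1{\mathbf{x}_{wv}}$. $F[S]$ is the induced subdigraph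 on $S$. *)

theory Defs
  imports Complex_Main
begin

definition digraph :: "'a set \<Rightarrow> ('a \<times> 'a) set \<Rightarrow> bool" where
  "digraph V E \<longleftrightarrow> E \<subseteq> V \<times> V \<and> (\<forall>v. (v, v) \<notin> E)"

definition out_nbrs :: "('a \<times> 'a) set \<Rightarrow> 'a \<Rightarrow> 'a set" where
  "out_nbrs E v = {w. (v, w) \<in> E}"

definition in_nbrs :: "('a \<times> 'a) set \<Rightarrow> 'a \<Rightarrow> 'a set" where
  "in_nbrs E v = {w. (w, v) \<in> E}"

definition induced_edges :: "('a \<times> 'a) set \<Rightarrow> 'a set \<Rightarrow> ('a \<times> 'a) set" where
  "induced_edges E S = E \<inter> (S \<times> S)"

definition n_eps_digraph :: "nat \<Rightarrow> real \<Rightarrow> 'a set \<Rightarrow> ('a \<times> 'a) set \<Rightarrow> bool" where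
  "n_eps_digraph n \<epsilon> V E \<longleftrightarrow> digraph V E \<and> finite V \<and> card V = n \<and>
     (\<forall>v\<in>V. real (card (out_nbrs E v)) \<ge> (1/2 + \<epsilon>) * n \<and>
             real (card (in_nbrs E v)) \<ge> (1/2 + \<epsilon>) * n)"

definition perfect_frac_matching :: "'a set \<Rightarrow> ('a \<times> 'a) set \<Rightarrow> ('a \<times> 'a \<Rightarrow> real) \<Rightarrow> bool" where
  "perfect_frac_matching V E x \<longleftrightarrow> (\<forall>e\<in>E. x e \<ge> 0) \<and>
     (\<forall>v\<in>V. (\<Sum>w\<in>out_nbrs E v. x (v, w)) = 1 \<and> (\<Sum>w\<in>in_nbrs E v. x (w, v)) = 1)"

definition b_normal :: "real \<Rightarrow> 'a set \<Rightarrow> ('a \<times> 'a) set \<Rightarrow> ('a \<times> 'a \<Rightarrow> real) \<Rightarrow> bool" where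
  "b_normal b V E x \<longleftrightarrow>
     (\<forall>e\<in>E. 1 / (b * real (card V)) \<le> x e \<and> x e \<le> b / real (card V))"

definition ent :: "('a \<times> 'a) set \<Rightarrow> ('a \<times> 'a \<Rightarrow> real) \<Rightarrow> real" where
  "ent E x = (\<Sum>e\<in>E. x e * log 2 (1 / x e))"

definition ent_out :: "('a \<times> 'a) set \<Rightarrow> ('a \<times> 'a \<Rightarrow> real) \<Rightarrow> 'a \<Rightarrow> real" where
  "ent_out E x v = (\<Sum>w\<in>out_nbrs E v. x (v, w) * log 2 (1 / x (v, w)))"

definition ent_in :: "('a \<times> 'a) set \<Rightarrow> ('a \<times> 'a \<Rightarrow> real) \<Rightarrow> 'a \<Rightarrow> real" where
  "ent_in E x v = (\<Sum>w\<in>in_nbrs E v. x (w, v) * log 2 (1 / x (w, v)))"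

definition approx_eq :: "real \<Rightarrow> real \<Rightarrow> real \<Rightarrow> bool" where
  "approx_eq a \<beta> c \<longleftrightarrow> \<beta> - c \<le> a \<and> a \<le> \<beta> + c"

end

theory Submission
  imports Defs "HOL-Real_Asymp.Real_Asymp"
begin

text \<open>
  Let \<open>W = (V(G) - M) \<union> {u}\<close>, so \<open>|W| = n - m\<close>. Rescale \<open>x\<close> by \<open>n / (n - m)\<close> on the
  edges of \<open>G - M\<close> and give the out- and in-edges of \<open>u\<close> in \<open>F[W]\<close> uniform weights.
  By (i) every row and column sum of this weighting is \<open>1 \<plusminus> (2\<eta> + 4/n)\<close>, where \<open>\<eta>\<close> is
  the error in (i), and by the degree condition on \<open>G\<close> and (iii) every vertex of \<open>F[W]\<close> has
  at least \<open>(1/2 + \<epsilon>)n - m - 1\<close> out- and in-neighbours, so any two vertices have at least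
  \<open>\<epsilon>n\<close> common in-neighbours. The defects can therefore be removed by first
  spreading them over the out-edges and then spreading the (zero-sum) column defects of
  each pair of vertices over their common in-neighbours; this changes every weight by a
  factor \<open>1 \<plusminus> \<delta>\<close>. The entropy of the result is essentially the rescaled entropy of \<open>x\<close>
  on \<open>G - M\<close>, which by (ii) loses only a fraction \<open>2(m+1)/n\<close> of \<open>h(x)\<close>. Writing
  \<open>n = exp (s\<^sup>2)\<close>, all error terms are explicit in \<open>s\<close> and beaten by the margins in the
  exponents as \<open>s \<rightarrow> \<infinity>\<close>.
\<close>

section \<open>Neighbourhoods and sums over edges\<close>

lemma induced_edges_subset: "induced_edges E S \<subseteq> S \<times> S"
  by (auto simp: induced_edges_def)

lemma out_nbrs_induced: "v \<in> S \<Longrightarrow> out_nbrs (induced_edges E S) v = out_nbrs E v \<inter> S"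
  by (auto simp: out_nbrs_def induced_edges_def)

lemma in_nbrs_induced: "v \<in> S \<Longrightarrow> in_nbrs (induced_edges E S) v = in_nbrs E v \<inter> S"
  by (auto simp: in_nbrs_def induced_edges_def)

lemma out_nbrs_subset: "E \<subseteq> V \<times> V \<Longrightarrow> out_nbrs E v \<subseteq> V"
  by (auto simp: out_nbrs_def)

lemma in_nbrs_subset: "E \<subseteq> V \<times> V \<Longrightarrow> in_nbrs E v \<subseteq> V"
  by (auto simp: in_nbrs_def)

lemma sum_edges_out_nbrs:
  assumes "finite V" "E \<subseteq> V \<times> V"
  shows "(\<Sum>e\<in>E. g e) = (\<Sum>v\<in>V. \<Sum>w\<in>out_nbrs E v. g (v, w))"
proof -
  have "E = Sigma V (out_nbrs E)"
    using assms(2) by (auto simp: out_nbrs_def)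
  moreover have "finite (out_nbrs E v)" for v
    by (rule finite_subset[OF out_nbrs_subset[OF assms(2)] assms(1)])
  ultimately show ?thesis
    using sum.Sigma[OF assms(1), of "out_nbrs E" "\<lambda>v w. g (v, w)"] by (simp add: case_prod_beta')
qed

lemma sum_edges_in_nbrs:
  assumes "finite V" "E \<subseteq> V \<times> V"
  shows "(\<Sum>e\<in>E. g e) = (\<Sum>w\<in>V. \<Sum>v\<in>in_nbrs E w. g (v, w))"
proof -
  have "out_nbrs E v = {w\<in>V. (v, w) \<in> E}" "in_nbrs E w = {v\<in>V. (v, w) \<in> E}" for v w
    using assms(2) by (auto simp: out_nbrs_def in_nbrs_def)
  then show ?thesis
    using sum_edges_out_nbrs[OF assms, of g]
      sum.swap_restrict[OF assms(1) assms(1), of "\<lambda>v w. g (v, w)" "\<lambda>v w. (v, w) \<in> E"]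
    by simp
qed

lemma sum_edges_head_in:
  assumes "finite V" "E \<subseteq> V \<times> V"
  shows "(\<Sum>e\<in>{e\<in>E. snd e \<in> M}. g e) = (\<Sum>v\<in>V. \<Sum>w\<in>M \<inter> out_nbrs E v. g (v, w))"
proof -
  have "out_nbrs {e\<in>E. snd e \<in> M} v = M \<inter> out_nbrs E v" for v
    by (auto simp: out_nbrs_def)
  then show ?thesis
    using sum_edges_out_nbrs[OF assms(1), of "{e\<in>E. snd e \<in> M}"] assms(2) by auto
qed

lemma sum_edges_tail_in:
  assumes "finite V" "E \<subseteq> V \<times> V"
  shows "(\<Sum>e\<in>{e\<in>E. fst e \<in> M}. g e) = (\<Sum>w\<in>V. \<Sum>v\<in>M \<inter> in_nbrs E w. g (v, w))"
proof -
  have "in_nbrs {e\<in>E. fst e \<in> M} w = M \<inter> in_nbrs E w" for w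
    by (auto simp: in_nbrs_def)
  then show ?thesis
    using sum_edges_in_nbrs[OF assms(1), of "{e\<in>E. fst e \<in> M}"] assms(2) by auto
qed

lemma sum_sum_antisym_eq_0:
  fixes f :: "'a \<Rightarrow> 'a \<Rightarrow> real"
  assumes "\<And>a b. f a b = - f b a"
  shows "(\<Sum>a\<in>A. \<Sum>b\<in>A. f a b) = 0"
proof -
  have "(\<Sum>a\<in>A. \<Sum>b\<in>A. f a b) = (\<Sum>b\<in>A. \<Sum>a\<in>A. - f b a)"
    by (subst sum.swap) (simp add: assms[symmetric])
  then show ?thesis
    by (simp add: sum_negf)
qed

section \<open>Correcting the row and column sums\<close>

text \<open>The imbalance \<open>q w - q w'\<close> of each pair is spread evenly over the common
  in-neighbours of \<open>w\<close> and \<open>w'\<close>; being antisymmetric in \<open>(w, w')\<close>, this does not change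
  any out-sum.\<close>

definition balancing :: "('a \<times> 'a) set \<Rightarrow> 'a set \<Rightarrow> ('a \<Rightarrow> real) \<Rightarrow> 'a \<Rightarrow> 'a \<Rightarrow> real" where
  "balancing E W q v w = (\<Sum>w'\<in>W. if v \<in> in_nbrs E w \<inter> in_nbrs E w'
     then (q w - q w') / (real (card W) * real (card (in_nbrs E w \<inter> in_nbrs E w'))) else 0)"

lemma balancing_out_sum:
  assumes fin: "finite W" and EW: "E \<subseteq> W \<times> W"
  shows "(\<Sum>w\<in>out_nbrs E v. balancing E W q v w) = 0"
proof -
  have "balancing E W q v w = 0" if "w \<in> W - out_nbrs E v" for w
    using that by (auto simp: balancing_def in_nbrs_def out_nbrs_def)
  then have "(\<Sum>w\<in>out_nbrs E v. balancing E W q v w) = (\<Sum>w\<in>W. balancing E W q v w)"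
    by (intro sum.mono_neutral_left[OF fin out_nbrs_subset[OF EW]]) auto
  also have "\<dots> = 0"
    unfolding balancing_def
    by (rule sum_sum_antisym_eq_0) (auto simp: Int_commute minus_divide_left)
  finally show ?thesis .
qed

lemma balancing_in_sum:
  assumes fin: "finite W" and EW: "E \<subseteq> W \<times> W"
    and common: "\<forall>w\<in>W. \<forall>w'\<in>W. 0 < card (in_nbrs E w \<inter> in_nbrs E w')"
    and q_sum: "(\<Sum>w\<in>W. q w) = 0" and w: "w \<in> W"
  shows "(\<Sum>v\<in>in_nbrs E w. balancing E W q v w) = q w"
proof -
  define C where "C w' = in_nbrs E w \<inter> in_nbrs E w'" for w'
  have inner: "(\<Sum>v\<in>in_nbrs E w. if v \<in> C w' then (q w - q w') / (real (card W) * real (card (C w')))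
      else 0) = (q w - q w') / real (card W)" if "w' \<in> W" for w'
  proof -
    have "C w' \<subseteq> in_nbrs E w" "finite (in_nbrs E w)"
      using finite_subset[OF in_nbrs_subset[OF EW] fin] by (auto simp: C_def)
    then have "(\<Sum>v\<in>in_nbrs E w. if v \<in> C w' then (q w - q w') / (real (card W) * real (card (C w')))
        else 0) = (\<Sum>v\<in>C w'. (q w - q w') / (real (card W) * real (card (C w'))))"
      by (intro sum.mono_neutral_cong_right) auto
    then show ?thesis
      using common w that by (simp add: C_def)
  qed
  have "(\<Sum>v\<in>in_nbrs E w. balancing E W q v w) = (\<Sum>w'\<in>W. (q w - q w') / real (card W))"
    unfolding balancing_def C_def[symmetric] by (subst sum.swap) (simp add: inner)
  also have "\<dots> = (real (card W) * q w - (\<Sum>w'\<in>W. q w')) / real (card W)"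
    by (simp add: sum_divide_distrib[symmetric] sum_subtractf)
  also have "\<dots> = q w"
    using q_sum w fin card_gt_0_iff by fastforce
  finally show ?thesis .
qed

lemma balancing_bound:
  assumes fin: "finite W" and K: "K > 0"
    and common: "\<forall>w\<in>W. \<forall>w'\<in>W. K \<le> real (card (in_nbrs E w \<inter> in_nbrs E w'))"
    and q_bound: "\<forall>w\<in>W. \<bar>q w\<bar> \<le> Q" and w: "w \<in> W"
  shows "\<bar>balancing E W q v w\<bar> \<le> 2 * Q / K"
proof -
  have W: "0 < real (card W)"
    using w fin card_gt_0_iff by fastforce
  have "\<bar>(q w - q w') / (real (card W) * real (card (in_nbrs E w \<inter> in_nbrs E w')))\<bar>
      \<le> 2 * Q / (real (card W) * K)" if "w' \<in> W" for w'
    using q_bound common w that W K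
    by (auto simp: abs_div intro!: frac_le) (smt (verit))
  moreover have "0 \<le> Q"
    using q_bound w by force
  ultimately have "\<bar>balancing E W q v w\<bar> \<le> (\<Sum>w'\<in>W. 2 * Q / (real (card W) * K))"
    unfolding balancing_def using W K by (intro order.trans[OF sum_abs] sum_mono) auto
  also have "\<dots> = 2 * Q / K"
    using W by simp
  finally show ?thesis .
qed

lemma in_sum_diff_le:
  assumes fin: "finite W" and EW: "E \<subseteq> W \<times> W" and near: "\<forall>e\<in>E. \<bar>y' e - y e\<bar> \<le> c"
    and c: "0 \<le> c"
  shows "\<bar>(\<Sum>v\<in>in_nbrs E w. y' (v, w)) - (\<Sum>v\<in>in_nbrs E w. y (v, w))\<bar> \<le> real (card W) * c"
proof -
  have "\<bar>\<Sum>v\<in>in_nbrs E w. y' (v, w) - y (v, w)\<bar> \<le> (\<Sum>v\<in>in_nbrs E w. c)"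
    using near by (intro order.trans[OF sum_abs] sum_mono) (auto simp: in_nbrs_def)
  also have "\<dots> \<le> real (card W) * c"
    using card_mono[OF fin in_nbrs_subset[OF EW]] c by (simp add: mult_right_mono)
  finally show ?thesis
    by (simp add: sum_subtractf)
qed

lemma exists_exact_out_sums_near:
  fixes E :: "('a \<times> 'a) set" and y :: "'a \<times> 'a \<Rightarrow> real" and D \<rho> :: real
  assumes EW: "E \<subseteq> W \<times> W" and D: "D > 0"
    and deg: "\<forall>v\<in>W. D \<le> real (card (out_nbrs E v))"
    and out_near: "\<forall>v\<in>W. \<bar>1 - (\<Sum>w\<in>out_nbrs E v. y (v, w))\<bar> \<le> \<rho>"
  shows "\<exists>y'. (\<forall>v\<in>W. (\<Sum>w\<in>out_nbrs E v. y' (v, w)) = 1) \<and> (\<forall>e\<in>E. \<bar>y' e - y e\<bar> \<le> \<rho> / D)"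
proof -
  define r where "r v = (1 - (\<Sum>w\<in>out_nbrs E v. y (v, w))) / real (card (out_nbrs E v))" for v
  have "(\<Sum>w\<in>out_nbrs E v. y (v, w) + r v) = 1" if "v \<in> W" for v
    using deg that D by (force simp: r_def sum.distrib)
  moreover have "\<bar>r v\<bar> \<le> \<rho> / D" if "v \<in> W" for v
  proof -
    have "\<bar>r v\<bar> = \<bar>1 - (\<Sum>w\<in>out_nbrs E v. y (v, w))\<bar> / real (card (out_nbrs E v))"
      by (simp add: r_def abs_div)
    also have "\<dots> \<le> \<rho> / D"
      using deg out_near that D by (intro frac_le) (auto dest: order.trans[OF abs_ge_zero])
    finally show ?thesis .
  qed
  ultimately show ?thesis
    using EW by (intro exI[of _ "\<lambda>e. y e + r (fst e)"]) auto
qed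

lemma exists_exact_sums_near:
  fixes E :: "('a \<times> 'a) set" and y :: "'a \<times> 'a \<Rightarrow> real" and D K \<rho> :: real
  assumes fin: "finite W" and EW: "E \<subseteq> W \<times> W" and D: "D > 0" and K: "K > 0"
    and deg: "\<forall>v\<in>W. D \<le> real (card (out_nbrs E v))"
    and common: "\<forall>w\<in>W. \<forall>w'\<in>W. K \<le> real (card (in_nbrs E w \<inter> in_nbrs E w'))"
    and out_near: "\<forall>v\<in>W. \<bar>1 - (\<Sum>w\<in>out_nbrs E v. y (v, w))\<bar> \<le> \<rho>"
    and in_near: "\<forall>w\<in>W. \<bar>1 - (\<Sum>v\<in>in_nbrs E w. y (v, w))\<bar> \<le> \<rho>"
  shows "\<exists>z. (\<forall>v\<in>W. (\<Sum>w\<in>out_nbrs E v. z (v, w)) = 1 \<and> (\<Sum>w\<in>in_nbrs E v. z (w, v)) = 1) \<and>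
             (\<forall>e\<in>E. \<bar>z e - y e\<bar> \<le> \<rho> / D + 2 * (\<rho> + real (card W) * \<rho> / D) / K)"
proof -
  obtain y' where y'_out: "\<forall>v\<in>W. (\<Sum>w\<in>out_nbrs E v. y' (v, w)) = 1"
    and y'_near: "\<forall>e\<in>E. \<bar>y' e - y e\<bar> \<le> \<rho> / D"
    using exists_exact_out_sums_near[OF EW D deg out_near] by blast
  define q where "q w = 1 - (\<Sum>v\<in>in_nbrs E w. y' (v, w))" for w
  define Q where "Q = \<rho> + real (card W) * \<rho> / D"
  have q_sum: "(\<Sum>w\<in>W. q w) = 0"
    using sum_edges_out_nbrs[OF fin EW, of y'] sum_edges_in_nbrs[OF fin EW, of y'] y'_out
    by (simp add: q_def sum_subtractf)
  have q_bound: "\<bar>q w\<bar> \<le> Q" if w: "w \<in> W" for w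
  proof -
    have "0 \<le> \<rho> / D"
      using out_near w D by (meson abs_ge_zero order.trans divide_nonneg_pos)
    then have "\<bar>(\<Sum>v\<in>in_nbrs E w. y' (v, w)) - (\<Sum>v\<in>in_nbrs E w. y (v, w))\<bar>
        \<le> real (card W) * \<rho> / D"
      using in_sum_diff_le[OF fin EW y'_near] by simp
    moreover have "\<bar>1 - (\<Sum>v\<in>in_nbrs E w. y (v, w))\<bar> \<le> \<rho>"
      using in_near w by blast
    ultimately show ?thesis
      unfolding q_def Q_def by linarith
  qed
  have common_pos: "\<forall>w\<in>W. \<forall>w'\<in>W. 0 < card (in_nbrs E w \<inter> in_nbrs E w')"
    using common K by (metis of_nat_0_less_iff order.strict_trans2)
  define z where "z e = y' e + balancing E W q (fst e) (snd e)" for e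
  have "(\<Sum>w\<in>out_nbrs E v. z (v, w)) = 1" if "v \<in> W" for v
    using y'_out balancing_out_sum[OF fin EW] that by (simp add: z_def sum.distrib)
  moreover have "(\<Sum>v\<in>in_nbrs E w. z (v, w)) = 1" if "w \<in> W" for w
    using balancing_in_sum[OF fin EW common_pos q_sum that]
    by (simp add: z_def sum.distrib, simp add: q_def)
  moreover have "\<bar>z e - y e\<bar> \<le> \<rho> / D + 2 * Q / K" if "e \<in> E" for e
  proof -
    have "\<bar>balancing E W q (fst e) (snd e)\<bar> \<le> 2 * Q / K"
      using that EW by (intro balancing_bound[OF fin K common ballI[OF q_bound]]) auto
    moreover have "\<bar>y' e - y e\<bar> \<le> \<rho> / D"
      using y'_near that by blast
    ultimately show ?thesis
      unfolding z_def by linarith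
  qed
  ultimately show ?thesis
    unfolding Q_def by blast
qed

lemma ln_2_ge_half: "1/2 \<le> ln (2::real)"
  using ln_le_minus_one[of "1/2 :: real"] by (simp add: ln_div)

lemma entropy_term_nonneg: "0 < x \<Longrightarrow> x \<le> 1 \<Longrightarrow> 0 \<le> x * log 2 (1 / x)"
  by simp

lemma entropy_term_le: "0 < x \<Longrightarrow> 1 / x \<le> B \<Longrightarrow> x * log 2 (1 / x) \<le> x * log 2 B"
  by (intro mult_left_mono log_mono) auto

lemma entropy_term_scale:
  assumes "a > 0" "x > 0"
  shows "(a * x) * log 2 (1 / (a * x)) = a * (x * log 2 (1 / x) - log 2 a * x)"
  using assms by (simp add: log_def ln_div ln_mult field_simps)

lemma entropy_term_perturb:
  fixes y z B :: real
  assumes y: "0 < y" "y \<le> 1" "1 / y \<le> B" and zy: "\<bar>z - y\<bar> \<le> y / 2"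
  shows "y * log 2 (1 / y) - \<bar>z - y\<bar> * (ln B + 2) / ln 2 \<le> z * log 2 (1 / z)"
proof -
  have z: "z > 0" "z \<le> 2 * y"
    using zy y by linarith+
  have "0 < B"
    using y(1,3) by (meson less_le_trans zero_less_divide_1_iff)
  then have "ln (1 / y) \<le> ln B"
    using y by (subst ln_le_cancel_iff) auto
  moreover have "0 \<le> ln (1 / y)"
    using y by simp
  ultimately have "\<bar>(z - y) * ln (1 / y)\<bar> \<le> \<bar>z - y\<bar> * ln B"
    by (simp add: abs_mult mult_left_mono)
  then have "z * ln (1 / y) \<ge> y * ln (1 / y) - \<bar>z - y\<bar> * ln B"
    by (simp add: algebra_simps abs_le_iff)
  moreover have "z * ln (z / y) \<le> z * (z / y - 1)"
    using z y by (intro mult_left_mono ln_le_minus_one) auto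
  moreover have "z * (z / y - 1) \<le> 2 * \<bar>z - y\<bar>"
  proof -
    have "z * (z / y - 1) = (z / y) * (z - y)"
      using y by (simp add: field_simps)
    also have "\<dots> \<le> (z / y) * \<bar>z - y\<bar>"
      using z y by (intro mult_left_mono) auto
    also have "\<dots> \<le> 2 * \<bar>z - y\<bar>"
      using z y by (intro mult_right_mono) (auto simp: field_simps)
    finally show ?thesis .
  qed
  moreover have "z * ln (1 / y) = z * ln (1 / z) + z * ln (z / y)"
    using z y by (simp add: ln_div algebra_simps)
  ultimately have "y * ln (1 / y) - \<bar>z - y\<bar> * (ln B + 2) \<le> z * ln (1 / z)"
    by (simp add: algebra_simps)
  then show ?thesis
    by (simp add: log_def divide_right_mono diff_divide_distrib[symmetric])
qed

lemma rescaled_complement_sum_near: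
  fixes f g :: "'a \<Rightarrow> real" and n m e :: real
  assumes fin: "finite S" "finite T" and T: "T - {u} = S - M"
    and sum_S: "(\<Sum>w\<in>S. f w) = 1" and sum_M: "approx_eq (\<Sum>w\<in>M \<inter> S. f w) ((m + 1) / n) e"
    and g: "\<forall>w\<in>S - M. g w = n / (n - m) * f w" and g_u: "u \<in> T \<Longrightarrow> 0 \<le> g u \<and> g u \<le> 2 / n"
    and n: "0 < n" and m: "0 \<le> m" "2 * m \<le> n"
  shows "\<bar>1 - (\<Sum>w\<in>T. g w)\<bar> \<le> 2 * e + 4 / n"
proof -
  define \<sigma> where "\<sigma> = (\<Sum>w\<in>M \<inter> S. f w)"
  define t where "t = (if u \<in> T then g u else 0)"
  have e: "0 \<le> e"
    using sum_M unfolding approx_eq_def by linarith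
  have "(\<Sum>w\<in>T. g w) = (\<Sum>w\<in>T - {u}. g w) + t"
    using sum_diff1[OF fin(2), of g u] by (simp add: t_def)
  also have "(\<Sum>w\<in>T - {u}. g w) = n / (n - m) * (\<Sum>w\<in>S - M. f w)"
    unfolding T using g by (simp add: sum_distrib_left)
  also have "(\<Sum>w\<in>S - M. f w) = 1 - \<sigma>"
    using sum.Int_Diff[OF fin(1), of f M] sum_S by (simp add: \<sigma>_def Int_commute)
  finally have sum_T: "(\<Sum>w\<in>T. g w) = n / (n - m) * (1 - \<sigma>) + t" .
  have "1 - n / (n - m) * (1 - \<sigma>) = (n * \<sigma> - m) / (n - m)"
    using n m by (simp add: field_simps)
  then have "\<bar>1 - n / (n - m) * (1 - \<sigma>)\<bar> = \<bar>n * \<sigma> - m\<bar> / (n - m)"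
    using n m by (simp add: abs_div)
  also have "\<dots> \<le> (1 + n * e) / (n - m)"
    using sum_M n m unfolding approx_eq_def \<sigma>_def
    by (intro divide_right_mono) (auto simp: field_simps abs_le_iff)
  also have "\<dots> \<le> (1 + n * e) / (n / 2)"
    using n m e by (intro divide_left_mono) auto
  also have "\<dots> = 2 / n + 2 * e"
    using n by (simp add: field_simps)
  finally have "\<bar>1 - n / (n - m) * (1 - \<sigma>)\<bar> \<le> 2 / n + 2 * e" .
  moreover have "0 \<le> t" "t \<le> 2 / n"
    using g_u n by (auto simp: t_def)
  moreover have "4 / n = 2 / n + 2 / n"
    by simp
  ultimately show ?thesis
    unfolding sum_T by linarith
qed

lemma normal_perturb:
  fixes b N \<delta> y z :: real
  assumes b: "2 \<le> b" and N: "0 < N" and \<delta>: "0 < \<delta>" "\<delta> \<le> 1"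
    and y: "1 / (b * N) \<le> y" "y \<le> b / N" and zy: "\<bar>z - y\<bar> \<le> \<delta> / (2 * b * N)"
  shows "1 / ((1 + \<delta>) * b * N) \<le> z" "z \<le> (1 + \<delta>) * b / N"
proof -
  have "1 / (1 + \<delta>) \<le> 1 - \<delta> / 2"
    using \<delta> by (simp add: field_simps)
  then have "1 / (1 + \<delta>) * (1 / (b * N)) \<le> (1 - \<delta> / 2) * (1 / (b * N))"
    using b N by (intro mult_right_mono) auto
  also have "\<dots> = 1 / (b * N) - \<delta> / (2 * b * N)"
    using b N by (simp add: field_simps)
  finally show "1 / ((1 + \<delta>) * b * N) \<le> z"
    using y zy by (simp add: abs_le_iff)
  have "\<delta> / (2 * b * N) \<le> \<delta> * b / N"
    using b N \<delta> by (intro frac_le) (auto intro: order.trans[of _ 4 "b * b"] mult_mono)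
  moreover have "(1 + \<delta>) * b / N = b / N + \<delta> * b / N"
    by (simp add: add_divide_distrib distrib_right)
  ultimately show "z \<le> (1 + \<delta>) * b / N"
    using y zy by (simp add: abs_le_iff)
qed

lemma log_ratio_le:
  fixes n m :: real
  assumes n: "0 < n" and m: "0 \<le> m" "2 * m \<le> n"
  shows "m * log 2 (n / (n - m)) \<le> 4 * m\<^sup>2 / n"
proof -
  have "ln (n / (n - m)) \<le> n / (n - m) - 1"
    using n m by (intro ln_le_minus_one) simp
  also have "\<dots> \<le> 2 * m / n"
    using n m by (simp add: field_simps mult_left_mono)
  finally have "log 2 (n / (n - m)) \<le> (2 * m / n) / ln 2"
    unfolding log_def by (intro divide_right_mono) auto
  also have "\<dots> \<le> (2 * m / n) / (1 / 2)"
    using ln_2_ge_half n m by (intro divide_left_mono) auto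
  finally have "m * log 2 (n / (n - m)) \<le> m * (4 * m / n)"
    using m by (intro mult_left_mono) auto
  then show ?thesis
    by (simp add: power2_eq_square mult.left_commute)
qed

lemma rescaled_entropy_arith:
  fixes n m h L e :: real
  assumes n: "0 < n" and m: "0 \<le> m" "2 * m \<le> n"
    and h: "h \<le> n * L" and L: "0 \<le> L" and e: "0 \<le> e"
  shows "(n - m) / n * h - (n - m) * log 2 (n / (n - m))
           - (2 * (2 * n + m\<^sup>2) * L / n + 4 * n * e + 4 * m\<^sup>2 / n)
         \<le> n / (n - m) * (h * (1 - 2 * (m + 1) / n) - 2 * n * e) - n * log 2 (n / (n - m))"
proof -
  define N where "N = n - m"
  have N: "0 < N" "n \<le> 2 * N"
    using n m by (auto simp: N_def)
  have c: "0 < 2 * n + m\<^sup>2"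
    using n by (simp add: add_pos_nonneg)
  have "n / N * (h * (1 - 2 * (m + 1) / n)) = N / n * h - (2 * n + m\<^sup>2) * h / (n * N)"
    using N n by (simp add: N_def field_simps power2_eq_square)
  moreover have "(2 * n + m\<^sup>2) * h / (n * N) \<le> (2 * n + m\<^sup>2) * (n * L) / (n * N)"
    using h c n N by (intro divide_right_mono mult_left_mono) auto
  moreover have "(2 * n + m\<^sup>2) * (n * L) / (n * N) \<le> 2 * (2 * n + m\<^sup>2) * L / n"
  proof -
    have "(2 * n + m\<^sup>2) * L / N \<le> (2 * n + m\<^sup>2) * L / (n / 2)"
      using n N c L by (intro divide_left_mono) auto
    then show ?thesis
      using n by (simp add: mult.commute mult.left_commute)
  qed
  moreover have "n / N * (2 * n * e) \<le> 2 * (2 * n * e)"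
    using N n e by (intro mult_right_mono) (auto simp: field_simps)
  moreover have "2 * (2 * n * e) = 4 * n * e"
    by simp
  moreover have "n * log 2 (n / N) - N * log 2 (n / N) = m * log 2 (n / N)"
    by (simp add: N_def algebra_simps)
  moreover have "n / N * (h * (1 - 2 * (m + 1) / n) - 2 * n * e)
      = n / N * (h * (1 - 2 * (m + 1) / n)) - n / N * (2 * n * e)"
    by (simp add: right_diff_distrib)
  ultimately show ?thesis
    using log_ratio_le[OF n m] unfolding N_def[symmetric] by linarith
qed

lemma correction_error_le:
  fixes n N \<rho> \<epsilon> b \<delta> :: real
  assumes n: "0 < N" "N \<le> n" and \<rho>: "0 \<le> \<rho>" and \<epsilon>: "0 < \<epsilon>" "\<epsilon> \<le> 1" and b: "0 < b"
    and key: "16 * b * \<rho> \<le> \<epsilon> * \<delta>"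
  shows "\<rho> / (n / 2) + 2 * (\<rho> + N * \<rho> / (n / 2)) / (\<epsilon> * n) \<le> \<delta> / (2 * b * N)"
proof -
  have "N * \<rho> \<le> n * \<rho>"
    using n \<rho> by (intro mult_right_mono) auto
  then have "N * \<rho> / (n / 2) \<le> 2 * \<rho>"
    using n by (simp add: field_simps)
  then have "2 * (\<rho> + N * \<rho> / (n / 2)) / (\<epsilon> * n) \<le> 6 * \<rho> / (\<epsilon> * n)"
    using n \<epsilon> by (intro divide_right_mono) auto
  moreover have "\<rho> / (n / 2) \<le> 2 * \<rho> / (\<epsilon> * n)"
    using n \<rho> \<epsilon> by (simp add: field_simps mult_left_le_one_le)
  moreover have "8 * \<rho> / (\<epsilon> * n) \<le> \<delta> / (2 * b * n)"
    using key n \<epsilon> b by (simp add: field_simps)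
  moreover have "\<delta> / (2 * b * n) \<le> \<delta> / (2 * b * N)"
  proof -
    have "0 \<le> \<epsilon> * \<delta>"
      using key b \<rho> by (smt (verit) mult_nonneg_nonneg)
    then show ?thesis
      using n \<epsilon> b by (intro divide_left_mono) (auto simp: zero_le_mult_iff)
  qed
  ultimately show ?thesis
    by (simp add: add_divide_distrib[symmetric])
qed

text \<open>The four terms bound the entropy lost by rescaling \<open>x\<close> and discarding the edges
  at \<open>M\<close>, the error in hypothesis (ii), the difference between \<open>n\<close> and \<open>n - m\<close> copies of
  \<open>log (n / (n - m))\<close>, and the perturbation to an exact matching.\<close>

definition entropy_loss :: "real \<Rightarrow> real \<Rightarrow> real \<Rightarrow> real \<Rightarrow> real \<Rightarrow> real" where
  "entropy_loss n m b \<eta> \<delta> =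
     2 * (2 * n + m\<^sup>2) * log 2 (b * n) / n + 4 * n * \<eta> + 4 * m\<^sup>2 / n + n * \<delta> * (ln (b * n) + 2)"

lemma entropy_loss_mono:
  assumes m: "0 \<le> m" "m \<le> m'" and n: "0 < n" and bn: "1 \<le> b * n"
  shows "entropy_loss n m b \<eta> \<delta> \<le> entropy_loss n m' b \<eta> \<delta>"
proof -
  have "m\<^sup>2 \<le> m'\<^sup>2"
    using m by (intro power_mono) auto
  moreover have "0 \<le> log 2 (b * n)"
    using bn by simp
  ultimately have "2 * (2 * n + m\<^sup>2) * log 2 (b * n) / n \<le> 2 * (2 * n + m'\<^sup>2) * log 2 (b * n) / n"
    "4 * m\<^sup>2 / n \<le> 4 * m'\<^sup>2 / n"
    using n by (auto intro!: divide_right_mono mult_right_mono)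
  then show ?thesis
    unfolding entropy_loss_def by linarith
qed

definition parameter_bounds :: "real \<Rightarrow> real \<Rightarrow> real \<Rightarrow> real \<Rightarrow> real \<Rightarrow> real \<Rightarrow> real \<Rightarrow> bool" where
  "parameter_bounds \<epsilon> b n m \<eta> \<delta> P \<longleftrightarrow> 4 * b \<le> n \<and> m + 2 \<le> \<epsilon> * n \<and> 2 * m \<le> n \<and> \<delta> \<le> 1 \<and>
     32 * b * \<eta> + 64 * b / n \<le> \<epsilon> * \<delta> \<and> entropy_loss n m b \<eta> \<delta> \<le> P"

lemma parameter_bounds_mono:
  assumes "parameter_bounds \<epsilon> b n m' \<eta> \<delta> P" "0 \<le> m" "m \<le> m'" "1 \<le> b"
  shows "parameter_bounds \<epsilon> b n m \<eta> \<delta> P"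
proof -
  have "1 \<le> b * n"
    using assms mult_mono[of 1 b 1 n] unfolding parameter_bounds_def by simp
  then show ?thesis
    using assms entropy_loss_mono[of m m' n b \<eta> \<delta>] unfolding parameter_bounds_def by auto
qed

section \<open>Replacing \<open>M\<close> by the vertex \<open>u\<close>\<close>

text \<open>\<open>\<eta>\<close> is the error term of hypotheses (i) and (ii); of the asymptotic conditions on
  \<open>m\<close>, \<open>b\<close> and \<open>n\<close> only \<open>m_small\<close>, \<open>m_half\<close> and \<open>b_small\<close> are used.\<close>

locale absorption =
  fixes VF :: "'a set" and EF :: "('a \<times> 'a) set" and VG :: "'a set" and u :: 'a
    and x :: "'a \<times> 'a \<Rightarrow> real" and n m :: nat and M :: "'a set" and b \<epsilon> \<eta> :: real
  assumes digraph: "digraph VF EF"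
    and dense: "n_eps_digraph n \<epsilon> VG (induced_edges EF VG)"
    and u_notin: "u \<notin> VG"
    and matching: "perfect_frac_matching VG (induced_edges EF VG) x"
    and normal: "b_normal b VG (induced_edges EF VG) x"
    and M_sub: "M \<subseteq> VG" and card_M: "card M = m + 1"
    and out_mass_M: "\<forall>v\<in>VG. approx_eq (\<Sum>w\<in>M \<inter> out_nbrs (induced_edges EF VG) v. x (v, w))
                        ((real m + 1) / real n) \<eta>"
    and in_mass_M: "\<forall>v\<in>VG. approx_eq (\<Sum>w\<in>M \<inter> in_nbrs (induced_edges EF VG) v. x (w, v))
                        ((real m + 1) / real n) \<eta>"
    and out_ent_M: "\<forall>v\<in>VG. approx_eq
                        (\<Sum>w\<in>M \<inter> out_nbrs (induced_edges EF VG) v. x (v, w) * log 2 (1 / x (v, w)))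
                        ((real m + 1) / real n * ent_out (induced_edges EF VG) x v) \<eta>"
    and in_ent_M: "\<forall>v\<in>VG. approx_eq
                        (\<Sum>w\<in>M \<inter> in_nbrs (induced_edges EF VG) v. x (w, v) * log 2 (1 / x (w, v)))
                        ((real m + 1) / real n * ent_in (induced_edges EF VG) x v) \<eta>"
    and u_out: "(1/2 + \<epsilon>) * real n \<le> real (card (out_nbrs EF u \<inter> VG))"
    and u_in: "(1/2 + \<epsilon>) * real n \<le> real (card (in_nbrs EF u \<inter> VG))"
    and \<epsilon>: "0 < \<epsilon>" "\<epsilon> \<le> 1" and b: "2 \<le> b" and \<eta>: "0 \<le> \<eta>"
    and m_small: "real m + 2 \<le> \<epsilon> * real n" and m_half: "2 * real m \<le> real n"
    and b_small: "4 * b \<le> real n"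
begin

abbreviation "EG \<equiv> induced_edges EF VG"
abbreviation "W \<equiv> (VG - M) \<union> {u}"
abbreviation "EH \<equiv> induced_edges EF W"
abbreviation "EI \<equiv> induced_edges EF (VG - M)"
abbreviation "N \<equiv> real n - real m"

lemma finite_VG: "finite VG" and card_VG: "card VG = n"
  using dense by (auto simp: n_eps_digraph_def)

lemma finite_W: "finite W"
  using finite_VG by simp

lemma n_pos: "0 < real n"
  using b b_small by linarith

lemma N_bounds: "0 < N" "real n \<le> 2 * N" "N \<le> real n"
  using m_half n_pos by auto

lemma card_W: "real (card W) = N"
proof -
  have "card (VG - M) = n - (m + 1)"
    using card_Diff_subset[OF finite_subset[OF M_sub finite_VG] M_sub] card_M card_VG by simp
  then show ?thesis
    using finite_VG u_notin N_bounds by simp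
qed

lemma no_loop: "(v, v) \<notin> EF"
  using digraph by (simp add: digraph_def)

lemma W_degrees:
  assumes v: "v \<in> W"
  shows "(1/2 + \<epsilon>) * real n - (real m + 1) \<le> real (card (out_nbrs EH v))"
    and "(1/2 + \<epsilon>) * real n - (real m + 1) \<le> real (card (in_nbrs EH v))"
proof -
  have deg: "(1/2 + \<epsilon>) * real n \<le> real (card (out_nbrs EF v \<inter> VG))
    \<and> (1/2 + \<epsilon>) * real n \<le> real (card (in_nbrs EF v \<inter> VG))"
  proof (cases "v = u")
    case False
    then have "v \<in> VG"
      using v by simp
    then show ?thesis
      using dense by (auto simp: n_eps_digraph_def out_nbrs_induced in_nbrs_induced)
  qed (use u_out u_in in simp)
  have removal: "(1/2 + \<epsilon>) * real n - (real m + 1) \<le> real (card B)"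
    if "(1/2 + \<epsilon>) * real n \<le> real (card A)" "A - M \<subseteq> B" "B \<subseteq> W" for A B
  proof -
    have "card A - card M \<le> card B"
      using diff_card_le_card_Diff[OF finite_subset[OF M_sub finite_VG], of A]
        card_mono[OF finite_subset[OF that(3) finite_W] that(2)] by linarith
    then have "real (card A) \<le> real (card B) + real (card M)"
      by linarith
    then show ?thesis
      using that(1) card_M by linarith
  qed
  show "(1/2 + \<epsilon>) * real n - (real m + 1) \<le> real (card (out_nbrs EH v))"
    using deg v by (intro removal[of "out_nbrs EF v \<inter> VG"])
      (auto simp: out_nbrs_induced intro: out_nbrs_subset[OF induced_edges_subset])
  show "(1/2 + \<epsilon>) * real n - (real m + 1) \<le> real (card (in_nbrs EH v))"
    using deg v by (intro removal[of "in_nbrs EF v \<inter> VG"])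
      (auto simp: in_nbrs_induced intro: in_nbrs_subset[OF induced_edges_subset])
qed

lemma W_common_in_nbrs:
  assumes "w \<in> W" "w' \<in> W"
  shows "\<epsilon> * real n \<le> real (card (in_nbrs EH w \<inter> in_nbrs EH w'))"
proof -
  have sub: "in_nbrs EH v \<subseteq> W" for v
    by (rule in_nbrs_subset[OF induced_edges_subset])
  have "card (in_nbrs EH w) + card (in_nbrs EH w')
      = card (in_nbrs EH w \<union> in_nbrs EH w') + card (in_nbrs EH w \<inter> in_nbrs EH w')"
    using finite_subset[OF sub finite_W] by (intro card_Un_Int) auto
  moreover have "card (in_nbrs EH w \<union> in_nbrs EH w') \<le> card W"
    using sub by (intro card_mono[OF finite_W]) auto
  ultimately have "real (card (in_nbrs EH w)) + real (card (in_nbrs EH w'))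
      \<le> real (card W) + real (card (in_nbrs EH w \<inter> in_nbrs EH w'))"
    by linarith
  moreover have "(1/2 + \<epsilon>) * real n = real n / 2 + \<epsilon> * real n"
    by (simp add: algebra_simps)
  ultimately show ?thesis
    using W_degrees(2)[OF assms(1)] W_degrees(2)[OF assms(2)] card_W m_small by linarith
qed

lemma W_degrees_half:
  assumes "v \<in> W"
  shows "real n / 2 \<le> real (card (out_nbrs EH v))" "real n / 2 \<le> real (card (in_nbrs EH v))"
proof -
  have "(1/2 + \<epsilon>) * real n = real n / 2 + \<epsilon> * real n"
    by (simp add: algebra_simps)
  then show "real n / 2 \<le> real (card (out_nbrs EH v))" "real n / 2 \<le> real (card (in_nbrs EH v))"
    using W_degrees[OF assms] m_small by linarith+
qed

lemma card_nbrs_W_le: "real (card (out_nbrs EH v)) \<le> N" "real (card (in_nbrs EH v)) \<le> N"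
  using card_mono[OF finite_W out_nbrs_subset[OF induced_edges_subset]]
    card_mono[OF finite_W in_nbrs_subset[OF induced_edges_subset]] card_W
  by (metis of_nat_le_iff)+

definition y :: "'a \<times> 'a \<Rightarrow> real" where
  "y e = (if fst e = u then 1 / real (card (out_nbrs EH u))
          else if snd e = u then 1 / real (card (in_nbrs EH u))
          else real n / N * x e)"

lemma inverse_degree_u_bounds:
  assumes "d = real (card (out_nbrs EH u)) \<or> d = real (card (in_nbrs EH u))"
  shows "1 / (b * N) \<le> 1 / d" "1 / d \<le> b / N" "1 / d \<le> 2 / real n"
proof -
  have d: "real n / 2 \<le> d" "d \<le> N"
    using assms W_degrees_half[of u] card_nbrs_W_le by auto
  show "1 / d \<le> 2 / real n"
    using d n_pos by (simp add: field_simps)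
  then show "1 / d \<le> b / N"
    using N_bounds b by (smt (verit) divide_right_mono frac_le)
  show "1 / (b * N) \<le> 1 / d"
    using d N_bounds n_pos b by (intro frac_le) (auto intro: order.trans[of d N "b * N"])
qed

lemma y_bounds:
  assumes "e \<in> EH"
  shows "1 / (b * N) \<le> y e" "y e \<le> b / N"
proof -
  obtain v w where e: "e = (v, w)"
    by (cases e)
  consider "v = u" | "v \<noteq> u" "w = u" | "v \<noteq> u" "w \<noteq> u"
    by blast
  then have "1 / (b * N) \<le> y e \<and> y e \<le> b / N"
  proof cases
    case 3
    then have "e \<in> EG"
      using assms e by (auto simp: induced_edges_def)
    then have x: "1 / (b * real n) \<le> x e" "x e \<le> b / real n"
      using normal card_VG by (auto simp: b_normal_def)
    have "0 \<le> real n / N"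
      using n_pos N_bounds by simp
    from mult_left_mono[OF x(1) this] mult_left_mono[OF x(2) this]
    have "real n / N * (1 / (b * real n)) \<le> real n / N * x e"
      "real n / N * x e \<le> real n / N * (b / real n)" .
    moreover have "y e = real n / N * x e"
      using 3 e by (simp add: y_def)
    ultimately show ?thesis
      using n_pos by (simp add: mult.commute)
  qed (use e inverse_degree_u_bounds in \<open>auto simp: y_def\<close>)
  then show "1 / (b * N) \<le> y e" "y e \<le> b / N"
    by auto
qed

lemma finite_nbrs_EH: "finite (out_nbrs EH v)" "finite (in_nbrs EH v)"
  using finite_subset[OF out_nbrs_subset[OF induced_edges_subset] finite_W]
    finite_subset[OF in_nbrs_subset[OF induced_edges_subset] finite_W] by auto

lemma finite_nbrs_EG: "finite (out_nbrs EG v)" "finite (in_nbrs EG v)"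
  using finite_subset[OF out_nbrs_subset[OF induced_edges_subset] finite_VG]
    finite_subset[OF in_nbrs_subset[OF induced_edges_subset] finite_VG] by auto

lemma y_out_sums_near:
  assumes "v \<in> W"
  shows "\<bar>1 - (\<Sum>w\<in>out_nbrs EH v. y (v, w))\<bar> \<le> 2 * \<eta> + 4 / real n"
proof (cases "v = u")
  case True
  have "0 < real (card (out_nbrs EH u))"
    using W_degrees_half(1)[of u] n_pos by simp
  then show ?thesis
    using True \<eta> n_pos by (simp add: y_def)
next
  case False
  then have v: "v \<in> VG" "v \<notin> M"
    using assms by auto
  have T: "out_nbrs EH v - {u} = out_nbrs EG v - M"
    using v u_notin by (auto simp: out_nbrs_def induced_edges_def)
  have y: "\<forall>w\<in>out_nbrs EG v - M. y (v, w) = real n / N * x (v, w)"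
    using False u_notin by (auto simp: y_def out_nbrs_def induced_edges_def)
  have y_u: "0 \<le> y (v, u) \<and> y (v, u) \<le> 2 / real n"
    using False inverse_degree_u_bounds(3)[of "real (card (in_nbrs EH u))"]
      W_degrees_half(2)[of u] n_pos by (simp add: y_def)
  have x: "(\<Sum>w\<in>out_nbrs EG v. x (v, w)) = 1"
    using matching v by (simp add: perfect_frac_matching_def)
  show ?thesis
    using rescaled_complement_sum_near[where f = "\<lambda>w. x (v, w)" and g = "\<lambda>w. y (v, w)",
        OF finite_nbrs_EG(1) finite_nbrs_EH(1) T x _ y _ n_pos _ m_half]
      out_mass_M v(1) y_u by simp
qed

lemma y_in_sums_near:
  assumes "w \<in> W"
  shows "\<bar>1 - (\<Sum>v\<in>in_nbrs EH w. y (v, w))\<bar> \<le> 2 * \<eta> + 4 / real n"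
proof (cases "w = u")
  case True
  have "0 < real (card (in_nbrs EH u))"
    using W_degrees_half(2)[of u] n_pos by simp
  moreover have "v \<noteq> u" if "v \<in> in_nbrs EH u" for v
    using that no_loop by (auto simp: in_nbrs_def induced_edges_def)
  ultimately show ?thesis
    using True \<eta> n_pos by (simp add: y_def)
next
  case False
  then have w: "w \<in> VG" "w \<notin> M"
    using assms by auto
  have T: "in_nbrs EH w - {u} = in_nbrs EG w - M"
    using w u_notin by (auto simp: in_nbrs_def induced_edges_def)
  have y: "\<forall>v\<in>in_nbrs EG w - M. y (v, w) = real n / N * x (v, w)"
    using False u_notin by (auto simp: y_def in_nbrs_def induced_edges_def)
  have y_u: "0 \<le> y (u, w) \<and> y (u, w) \<le> 2 / real n"
    using inverse_degree_u_bounds(3)[of "real (card (out_nbrs EH u))"]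
      W_degrees_half(1)[of u] n_pos by (simp add: y_def)
  have x: "(\<Sum>v\<in>in_nbrs EG w. x (v, w)) = 1"
    using matching w by (simp add: perfect_frac_matching_def)
  show ?thesis
    using rescaled_complement_sum_near[where f = "\<lambda>v. x (v, w)" and g = "\<lambda>v. y (v, w)",
        OF finite_nbrs_EG(2) finite_nbrs_EH(2) T x _ y _ n_pos _ m_half]
      in_mass_M w(1) y_u by simp
qed

lemma exists_exact_near_y:
  assumes key: "32 * b * \<eta> + 64 * b / real n \<le> \<epsilon> * \<delta>"
  shows "\<exists>z. (\<forall>v\<in>W. (\<Sum>w\<in>out_nbrs EH v. z (v, w)) = 1 \<and> (\<Sum>w\<in>in_nbrs EH v. z (w, v)) = 1) \<and>
             (\<forall>e\<in>EH. \<bar>z e - y e\<bar> \<le> \<delta> / (2 * b * N))"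
proof -
  define \<rho> where "\<rho> = 2 * \<eta> + 4 / real n"
  have "\<rho> / (real n / 2) + 2 * (\<rho> + real (card W) * \<rho> / (real n / 2)) / (\<epsilon> * real n)
      \<le> \<delta> / (2 * b * N)"
    unfolding card_W using key N_bounds \<eta> n_pos \<epsilon> b
    by (intro correction_error_le) (auto simp: \<rho>_def algebra_simps)
  moreover have "\<exists>z. (\<forall>v\<in>W. (\<Sum>w\<in>out_nbrs EH v. z (v, w)) = 1 \<and> (\<Sum>w\<in>in_nbrs EH v. z (w, v)) = 1) \<and>
      (\<forall>e\<in>EH. \<bar>z e - y e\<bar> \<le> \<rho> / (real n / 2) + 2 * (\<rho> + real (card W) * \<rho> / (real n / 2)) / (\<epsilon> * real n))"
    using W_degrees_half W_common_in_nbrs y_out_sums_near y_in_sums_near n_pos \<epsilon>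
    by (intro exists_exact_sums_near[OF finite_W induced_edges_subset]) (auto simp: \<rho>_def)
  ultimately show ?thesis
    by (meson order.trans)
qed

lemma normal_near_y:
  assumes \<delta>: "0 < \<delta>" "\<delta> \<le> 1" and near: "\<forall>e\<in>EH. \<bar>z e - y e\<bar> \<le> \<delta> / (2 * b * N)"
    and e: "e \<in> EH"
  shows "1 / ((1 + \<delta>) * b * N) \<le> z e" "z e \<le> (1 + \<delta>) * b / N"
  using normal_perturb[OF b N_bounds(1) \<delta> y_bounds[OF e]] near e by auto

lemma x_bounds:
  assumes "e \<in> EG"
  shows "0 < x e" "x e \<le> 1" "1 / x e \<le> b * real n"
proof -
  have x: "1 / (b * real n) \<le> x e" "x e \<le> b / real n"
    using normal assms card_VG by (auto simp: b_normal_def)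
  moreover have "0 < 1 / (b * real n)"
    using b n_pos by simp
  ultimately show "0 < x e"
    by linarith
  have "b / real n \<le> 1"
    using b b_small n_pos by simp
  with x show "x e \<le> 1"
    by linarith
  show "1 / x e \<le> b * real n"
    using x \<open>0 < x e\<close> b n_pos by (simp add: field_simps)
qed

lemma mass_EG: "(\<Sum>e\<in>EG. x e) = real n"
  using sum_edges_out_nbrs[OF finite_VG induced_edges_subset, of x] matching card_VG
  by (simp add: perfect_frac_matching_def)

lemma ent_EG_le: "ent EG x \<le> real n * log 2 (b * real n)"
proof -
  have "ent EG x \<le> (\<Sum>e\<in>EG. x e * log 2 (b * real n))"
    unfolding ent_def using x_bounds by (intro sum_mono entropy_term_le) auto
  also have "\<dots> = real n * log 2 (b * real n)"
    using mass_EG by (simp add: sum_distrib_right[symmetric])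
  finally show ?thesis .
qed

lemma ent_edges_head_in_M_le:
  "(\<Sum>e\<in>{e\<in>EG. snd e \<in> M}. x e * log 2 (1 / x e))
     \<le> (real m + 1) / real n * ent EG x + real n * \<eta>"
proof -
  have "(\<Sum>e\<in>{e\<in>EG. snd e \<in> M}. x e * log 2 (1 / x e))
      = (\<Sum>v\<in>VG. \<Sum>w\<in>M \<inter> out_nbrs EG v. x (v, w) * log 2 (1 / x (v, w)))"
    by (rule sum_edges_head_in[OF finite_VG induced_edges_subset])
  also have "\<dots> \<le> (\<Sum>v\<in>VG. (real m + 1) / real n * ent_out EG x v + \<eta>)"
    using out_ent_M by (intro sum_mono) (auto simp: approx_eq_def)
  also have "\<dots> = (real m + 1) / real n * (\<Sum>v\<in>VG. ent_out EG x v) + real n * \<eta>"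
    by (simp add: sum.distrib sum_distrib_left card_VG)
  also have "(\<Sum>v\<in>VG. ent_out EG x v) = ent EG x"
    by (simp add: ent_def ent_out_def sum_edges_out_nbrs[OF finite_VG induced_edges_subset])
  finally show ?thesis .
qed

lemma ent_edges_tail_in_M_le:
  "(\<Sum>e\<in>{e\<in>EG. fst e \<in> M}. x e * log 2 (1 / x e))
     \<le> (real m + 1) / real n * ent EG x + real n * \<eta>"
proof -
  have "(\<Sum>e\<in>{e\<in>EG. fst e \<in> M}. x e * log 2 (1 / x e))
      = (\<Sum>w\<in>VG. \<Sum>v\<in>M \<inter> in_nbrs EG w. x (v, w) * log 2 (1 / x (v, w)))"
    by (rule sum_edges_tail_in[OF finite_VG induced_edges_subset])
  also have "\<dots> \<le> (\<Sum>w\<in>VG. (real m + 1) / real n * ent_in EG x w + \<eta>)"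
    using in_ent_M by (intro sum_mono) (auto simp: approx_eq_def)
  also have "\<dots> = (real m + 1) / real n * (\<Sum>v\<in>VG. ent_in EG x v) + real n * \<eta>"
    by (simp add: sum.distrib sum_distrib_left card_VG)
  also have "(\<Sum>v\<in>VG. ent_in EG x v) = ent EG x"
    by (simp add: ent_def ent_in_def sum_edges_in_nbrs[OF finite_VG induced_edges_subset])
  finally show ?thesis .
qed

lemma ent_EI_ge: "ent EG x * (1 - 2 * (real m + 1) / real n) - 2 * real n * \<eta> \<le> ent EI x"
proof -
  define g where "g e = x e * log 2 (1 / x e)" for e
  define A where "A = {e\<in>EG. snd e \<in> M}"
  define B where "B = {e\<in>EG. fst e \<in> M}"
  have fin_EG: "finite EG"
    using finite_subset[OF induced_edges_subset finite_cartesian_product[OF finite_VG finite_VG]] .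
  have fin_AB: "finite A" "finite B"
    using fin_EG by (auto simp: A_def B_def)
  have g_nonneg: "0 \<le> g e" if "e \<in> EG" for e
    using x_bounds[OF that] by (simp add: g_def)
  have EI_sub: "EI \<subseteq> EG"
    by (auto simp: induced_edges_def)
  have "ent EG x = (\<Sum>e\<in>EG - EI. g e) + ent EI x"
    unfolding ent_def g_def by (rule sum.subset_diff[OF EI_sub fin_EG])
  moreover have "(\<Sum>e\<in>EG - EI. g e) \<le> (\<Sum>e\<in>A \<union> B. g e)"
    using fin_AB g_nonneg
    by (intro sum_mono2) (auto simp: A_def B_def induced_edges_def)
  moreover have "(\<Sum>e\<in>A \<union> B. g e) \<le> (\<Sum>e\<in>A. g e) + (\<Sum>e\<in>B. g e)"
  proof -
    have "0 \<le> (\<Sum>e\<in>A \<inter> B. g e)"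
      using g_nonneg by (intro sum_nonneg) (auto simp: A_def)
    then show ?thesis
      using sum_Un[OF fin_AB, of g] by simp
  qed
  moreover have "(\<Sum>e\<in>A. g e) \<le> (real m + 1) / real n * ent EG x + real n * \<eta>"
    using ent_edges_head_in_M_le by (simp add: A_def g_def)
  moreover have "(\<Sum>e\<in>B. g e) \<le> (real m + 1) / real n * ent EG x + real n * \<eta>"
    using ent_edges_tail_in_M_le by (simp add: B_def g_def)
  moreover have "ent EG x * (1 - 2 * (real m + 1) / real n)
      = ent EG x - 2 * ((real m + 1) / real n * ent EG x)"
    by (simp add: algebra_simps)
  moreover have "2 * real n * \<eta> = 2 * (real n * \<eta>)"
    by simp
  ultimately show ?thesis
    by (smt (verit))
qed

lemma mass_EI_le: "(\<Sum>e\<in>EI. x e) \<le> N"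
proof -
  have "(\<Sum>e\<in>EI. x e) = (\<Sum>v\<in>VG - M. \<Sum>w\<in>out_nbrs EI v. x (v, w))"
    using finite_VG by (intro sum_edges_out_nbrs induced_edges_subset) auto
  also have "\<dots> \<le> (\<Sum>v\<in>VG - M. \<Sum>w\<in>out_nbrs EG v. x (v, w))"
  proof (rule sum_mono)
    fix v
    have "out_nbrs EI v \<subseteq> out_nbrs EG v"
      by (auto simp: out_nbrs_def induced_edges_def)
    then show "(\<Sum>w\<in>out_nbrs EI v. x (v, w)) \<le> (\<Sum>w\<in>out_nbrs EG v. x (v, w))"
      by (rule sum_mono2[OF finite_nbrs_EG(1)])
        (auto simp: out_nbrs_def intro: less_imp_le x_bounds(1))
  qed
  also have "\<dots> = real (card (VG - M))"
    using matching by (simp add: perfect_frac_matching_def)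
  also have "\<dots> \<le> real (card W)"
    using finite_W by (intro of_nat_mono card_mono) auto
  finally show ?thesis
    using card_W by simp
qed

lemma ent_y_EI_ge:
  "n / N * (ent EG x * (1 - 2 * (real m + 1) / real n) - 2 * real n * \<eta>) - real n * log 2 (n / N)
     \<le> (\<Sum>e\<in>EI. y e * log 2 (1 / y e))"
proof -
  have scale: "0 < real n / N"
    using n_pos N_bounds by simp
  have "y e * log 2 (1 / y e) = n / N * (x e * log 2 (1 / x e) - log 2 (n / N) * x e)"
    if "e \<in> EI" for e
  proof -
    have "e \<in> EG" "fst e \<noteq> u" "snd e \<noteq> u"
      using that u_notin by (auto simp: induced_edges_def)
    then show ?thesis
      using entropy_term_scale[OF scale x_bounds(1)] by (simp add: y_def)
  qed
  then have "(\<Sum>e\<in>EI. y e * log 2 (1 / y e))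
      = n / N * ent EI x - n / N * (log 2 (n / N) * (\<Sum>e\<in>EI. x e))"
    by (simp add: ent_def sum_subtractf sum_distrib_left right_diff_distrib)
  moreover have "n / N * (log 2 (n / N) * (\<Sum>e\<in>EI. x e)) \<le> n / N * (log 2 (n / N) * N)"
    using mass_EI_le scale N_bounds by (intro mult_left_mono) auto
  moreover have "n / N * (log 2 (n / N) * N) = real n * log 2 (n / N)"
    using N_bounds by simp
  moreover have "n / N * (ent EG x * (1 - 2 * (real m + 1) / real n) - 2 * real n * \<eta>)
      \<le> n / N * ent EI x"
    using ent_EI_ge scale by (intro mult_left_mono) auto
  ultimately show ?thesis
    by linarith
qed

lemma b_le_N: "2 * b \<le> N" "1 \<le> b * N"
proof -
  show "2 * b \<le> N"
    using b_small m_half by linarith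
  then show "1 \<le> b * N"
    using b by (smt (verit) mult_le_cancel_left1)
qed

lemma entropy_term_near_y:
  assumes \<delta>: "0 < \<delta>" "\<delta> \<le> 1" and near: "\<bar>z e - y e\<bar> \<le> \<delta> / (2 * b * N)" and e: "e \<in> EH"
  shows "y e * log 2 (1 / y e) - \<delta> / (2 * b * N) * (ln (b * N) + 2) / ln 2 \<le> z e * log 2 (1 / z e)"
proof -
  note y = y_bounds[OF e]
  have y_pos: "0 < y e"
    using y(1) b N_bounds by (smt (verit) divide_pos_pos mult_pos_pos)
  have "b / N \<le> 1"
    using b_le_N(1) b N_bounds by simp
  then have "y e \<le> 1"
    using y(2) by linarith
  moreover have "1 / y e \<le> b * N"
    using y(1) y_pos b N_bounds by (simp add: field_simps)
  moreover have "\<bar>z e - y e\<bar> \<le> y e / 2"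
  proof -
    have "\<bar>z e - y e\<bar> \<le> \<delta> / (2 * b * N)"
      by (rule near)
    also have "\<dots> \<le> 1 / (2 * b * N)"
      using \<delta> b N_bounds by (intro divide_right_mono) auto
    also have "\<dots> = (1 / (b * N)) / 2"
      by simp
    also have "\<dots> \<le> y e / 2"
      using y(1) by (rule divide_right_mono) simp
    finally show ?thesis .
  qed
  ultimately have "y e * log 2 (1 / y e) - \<bar>z e - y e\<bar> * (ln (b * N) + 2) / ln 2 \<le> z e * log 2 (1 / z e)"
    using entropy_term_perturb y_pos by blast
  moreover have "\<bar>z e - y e\<bar> * (ln (b * N) + 2) / ln 2 \<le> \<delta> / (2 * b * N) * (ln (b * N) + 2) / ln 2"
    using near b_le_N(2) by (intro divide_right_mono mult_right_mono) auto
  ultimately show ?thesis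
    by linarith
qed

lemma card_EI_le: "real (card EI) \<le> N\<^sup>2"
proof -
  have "card EI \<le> card (VG - M) * card (VG - M)"
    using finite_VG by (metis card_cartesian_product card_mono finite_Diff
        finite_cartesian_product induced_edges_subset)
  moreover have "card (VG - M) \<le> card W"
    using finite_W by (intro card_mono) auto
  ultimately have "card EI \<le> card W * card W"
    using mult_le_mono order.trans by blast
  then have "real (card EI) \<le> real (card W) * real (card W)"
    by (metis of_nat_le_iff of_nat_mult)
  then show ?thesis
    using card_W by (simp add: power2_eq_square)
qed

lemma perturbation_entropy_loss_le:
  assumes \<delta>: "0 < \<delta>"
  shows "real (card EI) * (\<delta> / (2 * b * N) * (ln (b * N) + 2) / ln 2)
    \<le> real n * \<delta> * (ln (b * real n) + 2)"
proof -
  have ln_bN: "0 \<le> ln (b * N)"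
    using b_le_N(2) by simp
  have "real (card EI) * (\<delta> / (2 * b * N) * (ln (b * N) + 2) / ln 2)
      \<le> N\<^sup>2 * (\<delta> / (2 * b * N) * (ln (b * N) + 2) / ln 2)"
    using card_EI_le \<delta> b N_bounds ln_bN by (intro mult_right_mono) auto
  also have "\<dots> = N * \<delta> * (ln (b * N) + 2) / (2 * b * ln 2)"
    using N_bounds b by (simp add: field_simps power2_eq_square)
  also have "\<dots> \<le> N * \<delta> * (ln (b * N) + 2)"
  proof -
    have "1 \<le> b * ln 2"
      using mult_mono[OF b ln_2_ge_half] b by simp
    then have "1 \<le> 2 * b * ln 2"
      by (simp add: mult.assoc)
    moreover have "0 \<le> N * \<delta> * (ln (b * N) + 2)"
      using N_bounds \<delta> ln_bN by simp
    ultimately show ?thesis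
      using divide_left_mono[of 1 "2 * b * ln 2" "N * \<delta> * (ln (b * N) + 2)"] by simp
  qed
  also have "\<dots> \<le> real n * \<delta> * (ln (b * real n) + 2)"
    using N_bounds \<delta> b ln_bN b_le_N(2) by (intro mult_mono) auto
  finally show ?thesis .
qed

lemma ent_EI_near_y:
  assumes \<delta>: "0 < \<delta>" "\<delta> \<le> 1" and near: "\<forall>e\<in>EH. \<bar>z e - y e\<bar> \<le> \<delta> / (2 * b * N)"
  shows "(\<Sum>e\<in>EI. y e * log 2 (1 / y e)) - real n * \<delta> * (ln (b * real n) + 2)
           \<le> (\<Sum>e\<in>EI. z e * log 2 (1 / z e))"
proof -
  define c where "c = \<delta> / (2 * b * N) * (ln (b * N) + 2) / ln 2"
  have "EI \<subseteq> EH"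
    by (auto simp: induced_edges_def)
  then have "y e * log 2 (1 / y e) - c \<le> z e * log 2 (1 / z e)" if "e \<in> EI" for e
    unfolding c_def using entropy_term_near_y[OF \<delta>] near that by blast
  then have "(\<Sum>e\<in>EI. y e * log 2 (1 / y e) - c) \<le> (\<Sum>e\<in>EI. z e * log 2 (1 / z e))"
    by (rule sum_mono)
  then show ?thesis
    using perturbation_entropy_loss_le[OF \<delta>(1)] by (simp add: sum_subtractf c_def)
qed

lemma ent_near_y_ge:
  assumes \<delta>: "0 < \<delta>" "\<delta> \<le> 1" and near: "\<forall>e\<in>EH. \<bar>z e - y e\<bar> \<le> \<delta> / (2 * b * N)"
  shows "N / real n * ent EG x - N * log 2 (real n / N) - entropy_loss n m b \<eta> \<delta> \<le> ent EH z"
proof -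
  have "(\<Sum>e\<in>EI. z e * log 2 (1 / z e)) \<le> ent EH z"
  proof -
    have "0 \<le> z e * log 2 (1 / z e)" if e: "e \<in> EH" for e
    proof (rule entropy_term_nonneg)
      have "0 < 1 / ((1 + \<delta>) * b * N)"
        using \<delta> b N_bounds by simp
      then show "0 < z e"
        using normal_near_y(1)[OF \<delta> near e] by linarith
      have "(1 + \<delta>) * b / N \<le> 2 * b / N"
        using \<delta> b N_bounds by (intro divide_right_mono) auto
      also have "\<dots> \<le> 1"
        using b_le_N(1) N_bounds by simp
      finally show "z e \<le> 1"
        using normal_near_y(2)[OF \<delta> near e] by linarith
    qed
    moreover have "finite EH"
      using finite_subset[OF induced_edges_subset finite_cartesian_product[OF finite_W finite_W]] .
    ultimately show ?thesis
      unfolding ent_def by (intro sum_mono2) (auto simp: induced_edges_def)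
  qed
  moreover have "0 \<le> log 2 (b * real n)"
    using mult_mono[of 1 b 1 "real n"] b b_small by simp
  ultimately show ?thesis
    using ent_EI_near_y[OF \<delta> near] ent_y_EI_ge ent_EG_le n_pos m_half \<eta>
      rescaled_entropy_arith[of "real n" "real m" "ent EG x" "log 2 (b * real n)" \<eta>]
    unfolding entropy_loss_def by simp
qed

theorem exists_matching:
  assumes \<delta>: "0 < \<delta>" "\<delta> \<le> 1" and key: "32 * b * \<eta> + 64 * b / real n \<le> \<epsilon> * \<delta>"
  shows "\<exists>z. perfect_frac_matching W EH z \<and> b_normal ((1 + \<delta>) * b) W EH z \<and>
           N / real n * ent EG x - N * log 2 (real n / N) - entropy_loss n m b \<eta> \<delta> \<le> ent EH z"
proof -
  obtain z where sums: "\<forall>v\<in>W. (\<Sum>w\<in>out_nbrs EH v. z (v, w)) = 1 \<and> (\<Sum>w\<in>in_nbrs EH v. z (w, v)) = 1"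
    and near: "\<forall>e\<in>EH. \<bar>z e - y e\<bar> \<le> \<delta> / (2 * b * N)"
    using exists_exact_near_y[OF key] by blast
  have "0 \<le> z e" if "e \<in> EH" for e
    using normal_near_y(1)[OF \<delta> near that] \<delta> b N_bounds
    by (smt (verit) divide_nonneg_pos mult_pos_pos)
  with sums have "perfect_frac_matching W EH z"
    by (simp add: perfect_frac_matching_def)
  moreover have "b_normal ((1 + \<delta>) * b) W EH z"
    using normal_near_y[OF \<delta> near] card_W by (simp add: b_normal_def mult.assoc)
  ultimately show ?thesis
    using ent_near_y_ge[OF \<delta> near] by blast
qed

corollary exists_matching_within:
  assumes \<delta>: "0 < \<delta>" and bounds: "parameter_bounds \<epsilon> b n m \<eta> \<delta> P"
  shows "\<exists>z. perfect_frac_matching W EH z \<and> b_normal ((1 + \<delta>) * b) W EH z \<and>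
           N / real n * ent EG x - N * log 2 (real n / N) - P \<le> ent EH z"
proof -
  have "\<delta> \<le> 1" "32 * b * \<eta> + 64 * b / real n \<le> \<epsilon> * \<delta>" "entropy_loss n m b \<eta> \<delta> \<le> P"
    using bounds by (auto simp: parameter_bounds_def)
  with exists_matching[OF \<delta>] show ?thesis
    by (meson diff_left_mono order.trans)
qed

end

section \<open>Asymptotics of the error terms\<close>

lemma powr_sqrt_ln:
  fixes x a k :: real
  assumes x: "1 < x" and k: "0 < k"
  shows "x powr (a - 1 / (k * sqrt (ln x))) = exp (a * (sqrt (ln x))\<^sup>2) * exp (- sqrt (ln x) / k)"
proof -
  have s: "0 < sqrt (ln x)" "(sqrt (ln x))\<^sup>2 = ln x"
    using x by auto
  then have "(a - 1 / (k * sqrt (ln x))) * ln x = a * (sqrt (ln x))\<^sup>2 + (- sqrt (ln x) / k)"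
    using k by (simp add: field_simps power2_eq_square)
  then show ?thesis
    using x by (simp only: powr_def exp_add) simp
qed

text \<open>real_asymp cannot handle the powers \<open>n powr (a - 1 / (k * sqrt (ln n)))\<close> directly,
  but in the variable \<open>s = sqrt (ln n)\<close> every quantity is an exp-polynomial.\<close>

lemma eventually_parameter_bounds_exp:
  assumes "0 < \<epsilon>" "0 < b"
  shows "\<forall>\<^sub>F s in at_top. parameter_bounds \<epsilon> b (exp (s\<^sup>2)) (3 * exp s * exp (1/4 * s\<^sup>2))
    (exp (-3/4 * s\<^sup>2) * exp (- s / 18)) (exp (-3/4 * s\<^sup>2) * exp (- s / 22))
    (exp (1/4 * s\<^sup>2) * exp (- s / 24))"
  unfolding parameter_bounds_def entropy_loss_def using assms by (intro eventually_conj; real_asymp)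

lemma eventually_parameter_bounds:
  fixes \<epsilon> b :: real
  assumes \<epsilon>: "0 < \<epsilon>" and b: "1 \<le> b"
  shows "\<forall>\<^sub>F n in sequentially. \<forall>m \<gamma>. 0 \<le> m \<longrightarrow> \<gamma> \<le> 1 \<longrightarrow>
    m \<le> 3 * exp (\<gamma> * sqrt (ln (real n))) * real n powr (1/4) \<longrightarrow>
    parameter_bounds \<epsilon> b (real n) m (real n powr (-3/4 - 1 / (18 * sqrt (ln (real n)))))
      (real n powr (-3/4 - 1 / (22 * sqrt (ln (real n)))))
      (real n powr (1/4 - 1 / (24 * sqrt (ln (real n)))))"
proof -
  have lim: "filterlim (\<lambda>n. sqrt (ln (real n))) at_top sequentially"
    by real_asymp
  have "\<forall>\<^sub>F n in sequentially. parameter_bounds \<epsilon> b (exp ((sqrt (ln (real n)))\<^sup>2))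
      (3 * exp (sqrt (ln (real n))) * exp (1/4 * (sqrt (ln (real n)))\<^sup>2))
      (exp (-3/4 * (sqrt (ln (real n)))\<^sup>2) * exp (- sqrt (ln (real n)) / 18))
      (exp (-3/4 * (sqrt (ln (real n)))\<^sup>2) * exp (- sqrt (ln (real n)) / 22))
      (exp (1/4 * (sqrt (ln (real n)))\<^sup>2) * exp (- sqrt (ln (real n)) / 24))"
    by (rule eventually_compose_filterlim[OF eventually_parameter_bounds_exp[OF \<epsilon>] lim])
      (use b in simp)
  moreover have "\<forall>\<^sub>F n in sequentially. 2 \<le> n"
    by (rule eventually_ge_at_top)
  ultimately show ?thesis
  proof eventually_elim
    case (elim n)
    define s where "s = sqrt (ln (real n))"
    have x: "1 < real n"
      using elim(2) by simp
    have "exp (s\<^sup>2) = real n" "real n powr (1/4) = exp (1/4 * s\<^sup>2)"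
      using x by (simp_all add: powr_def s_def)
    then have bounds: "parameter_bounds \<epsilon> b (real n) (3 * exp s * real n powr (1/4))
        (real n powr (-3/4 - 1 / (18 * s))) (real n powr (-3/4 - 1 / (22 * s)))
        (real n powr (1/4 - 1 / (24 * s)))"
      using elim(1) by (simp add: powr_sqrt_ln[OF x] s_def)
    have "exp (\<gamma> * s) \<le> exp s" if "\<gamma> \<le> 1" for \<gamma>
      using that x by (simp add: s_def mult_left_le_one_le)
    then have "m \<le> 3 * exp s * real n powr (1/4)"
      if "\<gamma> \<le> 1" "m \<le> 3 * exp (\<gamma> * s) * real n powr (1/4)" for m \<gamma>
      using that by (smt (verit) mult_left_mono mult_right_mono powr_ge_zero)
    then show ?case
      using parameter_bounds_mono[OF bounds _ _ b] unfolding s_def by blast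
  qed
qed

theorem lemma4p5:
  "\<forall>\<epsilon>::real. 0 < \<epsilon> \<and> \<epsilon> \<le> 1 \<longrightarrow>
   (\<exists>b0::real. \<forall>b\<ge>b0. \<exists>\<gamma>0::real. \<gamma>0 > 0 \<and>
   (\<forall>\<gamma>. 0 < \<gamma> \<and> \<gamma> \<le> \<gamma>0 \<longrightarrow> (\<exists>n0::nat. \<forall>n\<ge>n0.
   \<forall>(VF::'a set) EF VG u (x::'a \<times> 'a \<Rightarrow> real) (m::nat) M.
     digraph VF EF \<longrightarrow> VG \<subseteq> VF \<longrightarrow>
     n_eps_digraph n \<epsilon> VG (induced_edges EF VG) \<longrightarrow>
     u \<in> VF - VG \<longrightarrow>
     perfect_frac_matching VG (induced_edges EF VG) x \<longrightarrow>
     b_normal b VG (induced_edges EF VG) x \<longrightarrow>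
     real n powr (1/4) \<le> real m \<longrightarrow>
     real m \<le> 3 * exp (\<gamma> * sqrt (ln (real n))) * real n powr (1/4) \<longrightarrow>
     M \<subseteq> VG \<longrightarrow> card M = m + 1 \<longrightarrow>
     (\<forall>v\<in>VG.
        approx_eq (\<Sum>w\<in>M \<inter> out_nbrs (induced_edges EF VG) v. x (v, w))
          ((real m + 1) / real n) (real n powr (-3/4 - 1 / (18 * sqrt (ln (real n))))) \<and>
        approx_eq (\<Sum>w\<in>M \<inter> in_nbrs (induced_edges EF VG) v. x (w, v))
          ((real m + 1) / real n) (real n powr (-3/4 - 1 / (18 * sqrt (ln (real n))))) \<and>
        approx_eq (\<Sum>w\<in>M \<inter> out_nbrs (induced_edges EF VG) v. x (v, w) * log 2 (1 / x (v, w)))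
          ((real m + 1) / real n * ent_out (induced_edges EF VG) x v)
          (real n powr (-3/4 - 1 / (18 * sqrt (ln (real n))))) \<and>
        approx_eq (\<Sum>w\<in>M \<inter> in_nbrs (induced_edges EF VG) v. x (w, v) * log 2 (1 / x (w, v)))
          ((real m + 1) / real n * ent_in (induced_edges EF VG) x v)
          (real n powr (-3/4 - 1 / (18 * sqrt (ln (real n)))))) \<longrightarrow>
     real (card (out_nbrs EF u \<inter> VG)) \<ge> (1/2 + \<epsilon>) * real n \<longrightarrow>
     real (card (in_nbrs EF u \<inter> VG)) \<ge> (1/2 + \<epsilon>) * real n \<longrightarrow>
     approx_eq (real (card (out_nbrs EF u \<inter> VG \<inter> M)))
       ((real m + 1) / real n * real (card (out_nbrs EF u \<inter> VG)))
       (real n powr (1/4 - 1 / (17 * sqrt (ln (real n))))) \<longrightarrow>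
     approx_eq (real (card (in_nbrs EF u \<inter> VG \<inter> M)))
       ((real m + 1) / real n * real (card (in_nbrs EF u \<inter> VG)))
       (real n powr (1/4 - 1 / (17 * sqrt (ln (real n))))) \<longrightarrow>
     (\<exists>z. perfect_frac_matching ((VG - M) \<union> {u}) (induced_edges EF ((VG - M) \<union> {u})) z \<and>
          b_normal ((1 + real n powr (-3/4 - 1 / (22 * sqrt (ln (real n))))) * b)
            ((VG - M) \<union> {u}) (induced_edges EF ((VG - M) \<union> {u})) z \<and>
          ent (induced_edges EF ((VG - M) \<union> {u})) z \<ge>
            (real n - real m) / real n * ent (induced_edges EF VG) x
            - (real n - real m) * log 2 (real n / (real n - real m))
            - real n powr (1/4 - 1 / (24 * sqrt (ln (real n))))))))"
proof (intro allI impI, rule exI[of _ 2], intro allI impI, rule exI[of _ 1],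
    intro conjI allI impI, goal_cases)
  case (2 \<epsilon> b \<gamma>)
  then have \<epsilon>: "0 < \<epsilon>" "\<epsilon> \<le> 1" and b: "2 \<le> b" "1 \<le> b" and \<gamma>: "\<gamma> \<le> 1"
    by auto
  show ?case
    using eventually_parameter_bounds[OF \<epsilon>(1) b(2)] unfolding eventually_sequentially
  proof (elim exE, goal_cases)
    case (1 n0)
    show ?case
    proof (intro exI[of _ n0] allI impI, goal_cases)
      case prems: (1 n VF EF VG u x m M)
      have bounds: "parameter_bounds \<epsilon> b (real n) (real m)
          (real n powr (-3/4 - 1 / (18 * sqrt (ln (real n)))))
          (real n powr (-3/4 - 1 / (22 * sqrt (ln (real n)))))
          (real n powr (1/4 - 1 / (24 * sqrt (ln (real n)))))"
        using 1 prems(1,9) \<gamma> by simp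
      then have "absorption VF EF VG u x n m M b \<epsilon> (real n powr (-3/4 - 1 / (18 * sqrt (ln (real n)))))"
        unfolding absorption_def parameter_bounds_def using prems \<epsilon> b by auto
      moreover have "0 < real n powr (-3/4 - 1 / (22 * sqrt (ln (real n))))"
        using bounds b unfolding parameter_bounds_def by simp
      ultimately show ?case
        by (rule absorption.exists_matching_within[OF _ _ bounds])
    qed
  qed
qed simp

end
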